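(* $\mathrm{Win}_\mathcal{A} \equiv_W \mathrm{LPO}$.
   Context: Weihrauch reducibility: for partial multivalued maps $f,g$ between represented spaces (spaces $(X,\delta_X)$ with $\delta_X:\subseteq\mathbb{N}^\mathbb{N}\to X$ a partial surjection), $f\leq_W g$ iff there are computable partial $K,H:\subseteq\mathbb{N}^\mathbb{N}\to\mathbb{N}^\mathbb{N}$ such that for every realizer $G$ of $g$, $p\mapsto K(\langle p,G(H(p))\rangle)$ realizes $f$ (a realizer $F$ of $f:X\rightrightarrows Y$ satisfies $\delta_Y(F(p))\in f(\delta_X(p))$ for $\delta_X(p)\in\mathrm{dom}(f)$); $\equiv_W$ is the induced equivalence. $\mathrm{LPO}:\{0,1\}^\mathbb{N}\to\{0,1\}$ maps $p$ to $1$ iff $p=0^\mathbb{N}$. $\mathcal{A}$ denotes the closed subsets of $\{0,1\}^\mathbb{N}$, a closed set being named by an enumeration of words $w$ with $\bigcup w\{0,1\}^\mathbb{N}$ equal to its complement. Games: a win/lose game has two players 1 and 2, choices $\{0,1\}$, a turn function $d:\{0,1\}^*\to\{1,2\}$ (given as lookup table) and a winning set for player 1 (player 2 wins on the complement); a strategy of a player is a function from the histories $d^{-1}(i)$ to $\{0,1\}$, and it is winning if every play consistent with it is won by that player. $\mathrm{Win}_\Gamma$ takes a win/lose game whose winning set for player 1 is given by a $\Gamma$-name and outputs which player has a winning strategy. *)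

theory Defs
  imports Main "HOL-Library.Nat_Bijection"
begin

type_synonym baire = "nat \<Rightarrow> nat"

text \<open>A representation of (a subset of) a type: a partial map from Baire space;
  the represented space is its range.\<close>
type_synonym 'a rep = "baire \<Rightarrow> 'a option"

definition pair :: "baire \<Rightarrow> baire \<Rightarrow> baire" where
  "pair p q = (\<lambda>n. if even n then p (n div 2) else q (n div 2))"

definition fst_b :: "baire \<Rightarrow> baire" where "fst_b r = (\<lambda>n. r (2 * n))"
definition snd_b :: "baire \<Rightarrow> baire" where "snd_b r = (\<lambda>n. r (2 * n + 1))"

datatype prcode = Zero | Succ | Proj nat | Comp prcode "prcode list" | Prim prcode prcode

definition arg :: "nat \<Rightarrow> nat list \<Rightarrow> nat" where
  "arg i xs = (if i < length xs then xs ! i else 0)"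

fun eval :: "prcode \<Rightarrow> nat list \<Rightarrow> nat" where
  "eval Zero xs = 0"
| "eval Succ xs = Suc (arg 0 xs)"
| "eval (Proj i) xs = arg i xs"
| "eval (Comp f gs) xs = eval f (map (\<lambda>g. eval g xs) gs)"
| "eval (Prim f g) [] = eval f []"
| "eval (Prim f g) (0 # xs) = eval f xs"
| "eval (Prim f g) (Suc m # xs) = eval g (eval (Prim f g) (m # xs) # m # xs)"

text \<open>Standard characterisation: F is computable iff it is (a restriction of) the
  supremum of a primitive recursive word function: for every input p in the domain and
  every output position n, the PR function c, applied to n and (the code of) finite
  prefixes of p, eventually answers Suc (F p n) and never answers anything else than
  0 (= "no answer yet") or Suc (F p n).\<close>
definition prefix_code :: "baire \<Rightarrow> nat \<Rightarrow> nat" where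
  "prefix_code p k = list_encode (map p [0..<k])"

definition computable :: "(baire \<Rightarrow> baire option) \<Rightarrow> bool" where
  "computable F \<longleftrightarrow> (\<exists>c. \<forall>p q. F p = Some q \<longrightarrow> (\<forall>n.
      (\<exists>k. eval c [n, prefix_code p k] \<noteq> 0) \<and>
      (\<forall>k. eval c [n, prefix_code p k] \<noteq> 0 \<longrightarrow> eval c [n, prefix_code p k] = Suc (q n))))"

text \<open>A partial multivalued map X \<rightrightarrows> Y is a function to sets; its domain is the set of
  points with nonempty value.\<close>
definition realizes :: "'a rep \<Rightarrow> 'b rep \<Rightarrow> ('a \<Rightarrow> 'b set) \<Rightarrow> (baire \<Rightarrow> baire option) \<Rightarrow> bool" where
  "realizes \<delta>X \<delta>Y f F \<longleftrightarrow>
     (\<forall>p x. \<delta>X p = Some x \<and> f x \<noteq> {} \<longrightarrow> (\<exists>q y. F p = Some q \<and> \<delta>Y q = Some y \<and> y \<in> f x))"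

definition weihrauch_le ::
  "'a rep \<Rightarrow> 'b rep \<Rightarrow> ('a \<Rightarrow> 'b set) \<Rightarrow> 'c rep \<Rightarrow> 'd rep \<Rightarrow> ('c \<Rightarrow> 'd set) \<Rightarrow> bool" where
  "weihrauch_le \<delta>X \<delta>Y f \<delta>Z \<delta>W g \<longleftrightarrow>
     (\<exists>K H. computable K \<and> computable H \<and>
        (\<forall>G. realizes \<delta>Z \<delta>W g G \<longrightarrow>
           realizes \<delta>X \<delta>Y f (\<lambda>p. Option.bind (H p) (\<lambda>h. Option.bind (G h) (\<lambda>r. K (pair p r))))))"

definition weihrauch_equiv ::
  "'a rep \<Rightarrow> 'b rep \<Rightarrow> ('a \<Rightarrow> 'b set) \<Rightarrow> 'c rep \<Rightarrow> 'd rep \<Rightarrow> ('c \<Rightarrow> 'd set) \<Rightarrow> bool" where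
  "weihrauch_equiv \<delta>X \<delta>Y f \<delta>Z \<delta>W g \<longleftrightarrow>
     weihrauch_le \<delta>X \<delta>Y f \<delta>Z \<delta>W g \<and> weihrauch_le \<delta>Z \<delta>W g \<delta>X \<delta>Y f"

text \<open>Cantor space {0,1}^N as a subspace of Baire space (identity representation).\<close>
definition cantor_rep :: "baire rep" where
  "cantor_rep p = (if \<forall>n. p n \<le> 1 then Some p else None)"

text \<open>{0,1} (and {1,2}) represented by the first entry of a name.\<close>
definition bit_rep :: "nat rep" where
  "bit_rep p = (if p 0 \<le> 1 then Some (p 0) else None)"

definition LPO :: "baire \<Rightarrow> nat set" where
  "LPO p = {if p = (\<lambda>_. 0) then 1 else 0}"

text \<open>Bijective coding of binary words by natural numbers.\<close>
fun bw_encode :: "bool list \<Rightarrow> nat" where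
  "bw_encode [] = 0"
| "bw_encode (b # w) = Suc ((if b then 1 else 0) + 2 * bw_encode w)"

definition cyl :: "bool list \<Rightarrow> (nat \<Rightarrow> bool) set" where
  "cyl w = {x. \<forall>i < length w. x i = w ! i}"

text \<open>A name a enumerates words: a n = 0 means "no word", a n = Suc (code w) means w.
  It names the closed set whose complement is the union of the enumerated cylinders.\<close>
definition closed_named :: "baire \<Rightarrow> (nat \<Rightarrow> bool) set" where
  "closed_named a = - (\<Union> {cyl w | w. \<exists>n. a n = Suc (bw_encode w)})"

text \<open>A game: turn function d : {0,1}* \<rightarrow> {1,2} and winning set for player 1.\<close>
type_synonym game = "(bool list \<Rightarrow> nat) \<times> (nat \<Rightarrow> bool) set"

text \<open>Name of a game: pair of a lookup table t (t (code w) = d w) and an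
  \<A>-name of the winning set of player 1.\<close>
definition closed_game_rep :: "game rep" where
  "closed_game_rep r =
     (if \<forall>w. fst_b r (bw_encode w) \<in> {1, 2}
      then Some (\<lambda>w. fst_b r (bw_encode w), closed_named (snd_b r)) else None)"

definition prefix :: "(nat \<Rightarrow> bool) \<Rightarrow> nat \<Rightarrow> bool list" where
  "prefix x n = map x [0..<n]"

text \<open>A strategy of player i is a function on histories (only its values on d^{-1}(i) matter).\<close>
definition consistent :: "(bool list \<Rightarrow> nat) \<Rightarrow> nat \<Rightarrow> (bool list \<Rightarrow> bool) \<Rightarrow> (nat \<Rightarrow> bool) \<Rightarrow> bool" where
  "consistent d i \<sigma> x \<longleftrightarrow> (\<forall>n. d (prefix x n) = i \<longrightarrow> x n = \<sigma> (prefix x n))"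

definition winning_strategy :: "game \<Rightarrow> nat \<Rightarrow> (bool list \<Rightarrow> bool) \<Rightarrow> bool" where
  "winning_strategy G i \<sigma> \<longleftrightarrow>
     (\<forall>x. consistent (fst G) i \<sigma> x \<longrightarrow> (if i = 1 then x \<in> snd G else x \<notin> snd G))"

definition Win :: "game \<Rightarrow> nat set" where
  "Win G = {i \<in> {1, 2}. \<exists>\<sigma>. winning_strategy G i \<sigma>}"

definition player_rep :: "nat rep" where
  "player_rep p = (if p 0 \<in> {1, 2} then Some (p 0) else None)"

end

theory Submission
  imports Defs
begin

(*
  Win \<le> LPO.  Call a finite set S of positions a certificate (for player 2) if every w \<in> S
  either extends a word enumerated into the complement of the winning set, or is a
  player-1 position with both successors in S, or a player-2 position with some successor
  in S.  If [] lies in a certificate, player 2 wins by staying inside it (a play cannot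
  stay inside the finite S forever, so it leaves the closed set); otherwise player 1 wins
  by always moving to a position that lies in no certificate (such plays never hit the
  enumerated words).  Certificates are coded by natural numbers, and "M codes a certificate
  using the first m enumerated words" is primitive recursive in the game name.  Hence
  the 0/1-sequence "some M \<le> m codes a certificate" is computable from the game, and LPO
  applied to it tells which player wins.

  LPO \<le> Win.  Given p \<in> {0,1}^N, let player 1 make every move and take the closed set
  named by p itself: it is the whole space if p = 0 and empty otherwise.
*)

section \<open>Primitive recursive functions of several arguments\<close>

definition env :: "nat \<Rightarrow> nat list \<Rightarrow> nat list" where
  "env n xs = map (\<lambda>i. arg i xs) [0..<n]"

definition pr :: "nat \<Rightarrow> (nat list \<Rightarrow> nat) \<Rightarrow> bool" where
  "pr n f \<longleftrightarrow> (\<exists>c. \<forall>xs. eval c xs = f (env n xs))"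

lemma length_env [simp]: "length (env n xs) = n"
  by (simp add: env_def)

lemma arg_env [simp]: "arg i (env n xs) = (if i < n then arg i xs else 0)"
  by (simp add: env_def arg_def)

lemma env_id: "length xs = n \<Longrightarrow> env n xs = xs"
  by (auto simp: env_def arg_def intro: nth_equalityI)

lemma arg_tl: "arg i (tl xs) = arg (Suc i) xs"
  by (cases xs) (auto simp: arg_def)

lemma arg_drop: "arg i (drop k xs) = arg (i + k) xs"
  by (auto simp: arg_def add.commute)

lemma pr_cong: "pr n f \<Longrightarrow> (\<And>xs. length xs = n \<Longrightarrow> f xs = g xs) \<Longrightarrow> pr n g"
  unfolding pr_def by (metis length_env)

fun constcode :: "nat \<Rightarrow> prcode" where
  "constcode 0 = Zero"
| "constcode (Suc k) = Comp Succ [constcode k]"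

lemma pr_const: "pr n (\<lambda>_. k)"
proof -
  have "eval (constcode k) xs = k" for xs by (induction k) (auto simp: arg_def)
  then show ?thesis unfolding pr_def by blast
qed

lemma pr_arg: "i < n \<Longrightarrow> pr n (\<lambda>xs. arg i xs)"
  unfolding pr_def by (rule exI[of _ "Proj i"]) simp

lemma pr_Suc: "pr n f \<Longrightarrow> pr n (\<lambda>xs. Suc (f xs))"
  unfolding pr_def by (metis eval.simps(2,4) arg_def list.simps(8,9) length_Cons nth_Cons_0 zero_less_Suc)

lemma pr_comp:
  assumes g: "pr m g" and fs: "\<forall>i<m. pr n (fs i)"
  shows "pr n (\<lambda>xs. g (map (\<lambda>i. fs i xs) [0..<m]))"
proof -
  obtain cg where cg: "\<And>xs. eval cg xs = g (env m xs)" using g unfolding pr_def by blast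
  have "\<forall>i<m. \<exists>c. \<forall>xs. eval c xs = fs i (env n xs)" using fs unfolding pr_def by blast
  then obtain C where C: "\<And>i xs. i < m \<Longrightarrow> eval (C i) xs = fs i (env n xs)" by metis
  have "eval (Comp cg (map C [0..<m])) xs = g (map (\<lambda>i. fs i (env n xs)) [0..<m])" for xs
  proof -
    have "map (\<lambda>c. eval c xs) (map C [0..<m]) = map (\<lambda>i. fs i (env n xs)) [0..<m]"
      unfolding map_map by (rule map_cong) (auto simp: C)
    then show ?thesis by (simp only: eval.simps cg) (metis env_id length_map diff_zero length_upt)
  qed
  then show ?thesis unfolding pr_def by blast
qed

lemma pr_lift1:
  assumes "pr 1 (\<lambda>ys. h (arg 0 ys))" "pr n f"
  shows "pr n (\<lambda>xs. h (f xs))"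
  using pr_comp[OF assms(1), of n "\<lambda>_. f"] assms(2) by (simp add: arg_def)

lemma pr_lift2:
  assumes "pr 2 (\<lambda>ys. h (arg 0 ys) (arg 1 ys))" "pr n f" "pr n g"
  shows "pr n (\<lambda>xs. h (f xs) (g xs))"
proof -
  have "\<forall>i<2. pr n ((\<lambda>i. if i = 0 then f else g) i)"
    using assms by (auto simp: less_2_cases_iff)
  from pr_comp[OF assms(1) this] show ?thesis by (simp add: arg_def upt_rec)
qed

lemma pr_lift3:
  assumes "pr 3 (\<lambda>ys. h (arg 0 ys) (arg 1 ys) (arg 2 ys))" "pr n f" "pr n g" "pr n k"
  shows "pr n (\<lambda>xs. h (f xs) (g xs) (k xs))"
proof -
  have "\<forall>i<3. pr n ((\<lambda>i. if i = 0 then f else if i = 1 then g else k) i)"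
    using assms by auto
  from pr_comp[OF assms(1) this] show ?thesis by (simp add: arg_def upt_rec)
qed

fun natrec :: "nat \<Rightarrow> (nat \<Rightarrow> nat \<Rightarrow> nat) \<Rightarrow> nat \<Rightarrow> nat" where
  "natrec z s 0 = z"
| "natrec z s (Suc m) = s m (natrec z s m)"

lemma pr_natrec:
  assumes z: "pr n z" and s: "pr (Suc (Suc n)) (\<lambda>ys. s (arg 0 ys) (arg 1 ys) (drop 2 ys))"
    and b: "pr n b"
  shows "pr n (\<lambda>xs. natrec (z xs) (\<lambda>m v. s m v xs) (b xs))"
proof -
  obtain cz where cz: "\<And>xs. eval cz xs = z (env n xs)" using z unfolding pr_def by blast
  obtain cs where cs: "\<And>xs. eval cs xs = s (arg 0 (env (Suc (Suc n)) xs))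
      (arg 1 (env (Suc (Suc n)) xs)) (drop 2 (env (Suc (Suc n)) xs))"
    using s unfolding pr_def by blast
  obtain cb where cb: "\<And>xs. eval cb xs = b (env n xs)" using b unfolding pr_def by blast
  define step where "step = Comp cs (Proj 1 # Proj 0 # map (\<lambda>i. Proj (i+2)) [0..<n])"
  have rec: "eval (Prim cz step) (m # ys) = natrec (z ys) (\<lambda>m v. s m v ys) m"
    if "length ys = n" for m ys
  proof (induction m)
    case 0 then show ?case using that by (simp add: cz env_id)
  next
    case (Suc m)
    have l: "map ((\<lambda>g. eval g (v # m # ys)) \<circ> (\<lambda>i. Proj (Suc (Suc i)))) [0..<n] = ys" for v
      using that by (auto simp: arg_def intro: nth_equalityI)
    have "eval step (v # m # ys) = s m v ys" for v
      unfolding step_def using that by (simp add: cs l env_id arg_def del: upt_Suc)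
    then show ?case using Suc by simp
  qed
  have "map (\<lambda>c. eval c xs) (map Proj [0..<n]) = env n xs" for xs by (simp add: env_def)
  then have "eval (Comp (Prim cz step) (cb # map Proj [0..<n])) xs
      = natrec (z (env n xs)) (\<lambda>m v. s m v (env n xs)) (b (env n xs))" for xs
    by (simp add: cb rec)
  then show ?thesis unfolding pr_def by blast
qed

lemma pr_add: "pr n f \<Longrightarrow> pr n g \<Longrightarrow> pr n (\<lambda>xs. f xs + g xs)"
proof -
  have "pr 2 (\<lambda>xs. natrec (arg 0 xs) (\<lambda>m v. Suc v) (arg 1 xs))"
    by (rule pr_natrec) (rule pr_Suc pr_arg | simp add: arg_drop)+
  moreover have "natrec a (\<lambda>m v. Suc v) b = a + b" for a b by (induction b) auto
  ultimately have "pr 2 (\<lambda>ys. arg 0 ys + arg 1 ys)" by simp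
  then show "pr n f \<Longrightarrow> pr n g \<Longrightarrow> pr n (\<lambda>xs. f xs + g xs)" by (rule pr_lift2)
qed

lemma pr_pred: "pr n f \<Longrightarrow> pr n (\<lambda>xs. f xs - 1)"
proof -
  have "pr 1 (\<lambda>xs. natrec 0 (\<lambda>m v. m) (arg 0 xs))"
    by (rule pr_natrec) (rule pr_arg pr_const | simp add: arg_drop)+
  moreover have "natrec 0 (\<lambda>m v. m) b = b - 1" for b by (induction b) auto
  ultimately have "pr 1 (\<lambda>ys. arg 0 ys - 1)" by simp
  then show "pr n f \<Longrightarrow> pr n (\<lambda>xs. f xs - 1)" by (rule pr_lift1)
qed

lemma pr_diff: "pr n f \<Longrightarrow> pr n g \<Longrightarrow> pr n (\<lambda>xs. f xs - g xs)"
proof -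
  have "pr 2 (\<lambda>xs. natrec (arg 0 xs) (\<lambda>m v. v - 1) (arg 1 xs))"
    by (rule pr_natrec) (rule pr_pred pr_arg | simp add: arg_drop)+
  moreover have "natrec a (\<lambda>m v. v - 1) b = a - b" for a b by (induction b) auto
  ultimately have "pr 2 (\<lambda>ys. arg 0 ys - arg 1 ys)" by simp
  then show "pr n f \<Longrightarrow> pr n g \<Longrightarrow> pr n (\<lambda>xs. f xs - g xs)" by (rule pr_lift2)
qed

lemma pr_mult: "pr n f \<Longrightarrow> pr n g \<Longrightarrow> pr n (\<lambda>xs. f xs * g xs)"
proof -
  have "pr 2 (\<lambda>xs. natrec 0 (\<lambda>m v. v + arg 1 xs) (arg 0 xs))"
    by (rule pr_natrec) (rule pr_add pr_arg pr_const | simp add: arg_drop)+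
  moreover have "natrec 0 (\<lambda>m v. v + a) b = b * a" for a b by (induction b) auto
  ultimately have "pr 2 (\<lambda>ys. arg 0 ys * arg 1 ys)" by simp
  then show "pr n f \<Longrightarrow> pr n g \<Longrightarrow> pr n (\<lambda>xs. f xs * g xs)" by (rule pr_lift2)
qed

lemma pr_pow2: "pr n f \<Longrightarrow> pr n (\<lambda>xs. 2 ^ f xs)"
proof -
  have "pr 1 (\<lambda>xs. natrec 1 (\<lambda>m v. v + v) (arg 0 xs))"
    by (rule pr_natrec) (rule pr_add pr_arg pr_const | simp add: arg_drop)+
  moreover have "natrec 1 (\<lambda>m v. v + v) b = 2 ^ b" for b by (induction b) auto
  ultimately have "pr 1 (\<lambda>ys. 2 ^ arg 0 ys)" by simp
  then show "pr n f \<Longrightarrow> pr n (\<lambda>xs. 2 ^ f xs)" by (rule pr_lift1)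
qed

lemma pr_ifz:
  "pr n c \<Longrightarrow> pr n f \<Longrightarrow> pr n g \<Longrightarrow> pr n (\<lambda>xs. if c xs = 0 then f xs else g xs)"
proof -
  have "pr 3 (\<lambda>xs. natrec (arg 1 xs) (\<lambda>m v. arg 2 xs) (arg 0 xs))"
    by (rule pr_natrec) (rule pr_arg | simp add: arg_drop)+
  moreover have "natrec a (\<lambda>m v. b) c = (if c = 0 then a else b)" for a b c by (cases c) auto
  ultimately have "pr 3 (\<lambda>ys. if arg 0 ys = 0 then arg 1 ys else arg 2 ys)"
    by (simp only:)
  then show "pr n c \<Longrightarrow> pr n f \<Longrightarrow> pr n g \<Longrightarrow> pr n (\<lambda>xs. if c xs = 0 then f xs else g xs)"
    by (rule pr_lift3)
qed

definition prp :: "nat \<Rightarrow> (nat list \<Rightarrow> bool) \<Rightarrow> bool" where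
  "prp n P \<longleftrightarrow> pr n (\<lambda>xs. if P xs then 1 else 0)"

lemma pr_if: "prp n P \<Longrightarrow> pr n f \<Longrightarrow> pr n g \<Longrightarrow> pr n (\<lambda>xs. if P xs then f xs else g xs)"
  unfolding prp_def by (drule pr_ifz[where f=g and g=f]) (auto elim: pr_cong)

lemma prp_eq:
  assumes "pr n f" "pr n g"
  shows "prp n (\<lambda>xs. f xs = g xs)"
proof -
  have "pr n (\<lambda>xs. if (f xs - g xs) + (g xs - f xs) = 0 then 1 else 0)"
    using assms by (intro pr_ifz pr_add pr_diff pr_const)
  then show ?thesis unfolding prp_def by (rule pr_cong) simp
qed

lemma prp_less:
  assumes "pr n f" "pr n g"
  shows "prp n (\<lambda>xs. f xs < g xs)"
proof -
  have "pr n (\<lambda>xs. if Suc (f xs) - g xs = 0 then 1 else 0)"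
    using assms by (intro pr_ifz pr_Suc pr_diff pr_const)
  then show ?thesis unfolding prp_def by (rule pr_cong) simp
qed

lemma prp_comb:
  assumes "prp n P" "prp n Q"
  shows "prp n (\<lambda>xs. B (P xs) (Q xs))"
proof -
  let ?b = "\<lambda>x y. if B x y then 1 else 0 :: nat"
  let ?iP = "\<lambda>xs. if P xs then 1 else 0 :: nat" and ?iQ = "\<lambda>xs. if Q xs then 1 else 0 :: nat"
  have "pr n (\<lambda>xs. if ?iP xs = 0 then (if ?iQ xs = 0 then ?b False False else ?b False True)
                    else (if ?iQ xs = 0 then ?b True False else ?b True True))"
    using assms unfolding prp_def by (intro pr_ifz pr_const)
  then show ?thesis unfolding prp_def by (rule pr_cong) auto
qed

lemma prp_not: "prp n P \<Longrightarrow> prp n (\<lambda>xs. \<not> P xs)"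
  using prp_comb[of n P P "\<lambda>x y. \<not> x"] by simp

lemma prp_conj: "prp n P \<Longrightarrow> prp n Q \<Longrightarrow> prp n (\<lambda>xs. P xs \<and> Q xs)"
  by (rule prp_comb)

lemma prp_disj: "prp n P \<Longrightarrow> prp n Q \<Longrightarrow> prp n (\<lambda>xs. P xs \<or> Q xs)"
  by (rule prp_comb)

lemma prp_imp: "prp n P \<Longrightarrow> prp n Q \<Longrightarrow> prp n (\<lambda>xs. P xs \<longrightarrow> Q xs)"
  by (rule prp_comb)

lemma prp_le: "pr n f \<Longrightarrow> pr n g \<Longrightarrow> prp n (\<lambda>xs. f xs \<le> g xs)"
  using prp_not[OF prp_less[of n g f]] by (simp add: not_less)

text \<open>A function of (i, rest) stays primitive recursive when an ignored argument is
  inserted after i; this is how a bounded operator passes its running value past the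
  recursion's accumulator.\<close>
lemma pr_skip_arg1:
  assumes "pr (Suc n) (\<lambda>ys. F (arg 0 ys) (tl ys))"
  shows "pr (Suc (Suc n)) (\<lambda>ys. F (arg 0 ys) (drop 2 ys))"
proof -
  let ?fs = "\<lambda>i ys. if i = 0 then arg 0 ys else arg (Suc i) ys"
  have "\<forall>i<Suc n. pr (Suc (Suc n)) (?fs i)"
  proof (intro allI impI)
    fix i assume "i < Suc n"
    then show "pr (Suc (Suc n)) (?fs i)" by (cases "i = 0") (simp_all add: pr_arg)
  qed
  from pr_comp[OF assms this] show ?thesis
  proof (rule pr_cong)
    fix ys :: "nat list" assume l: "length ys = Suc (Suc n)"
    have "map (\<lambda>i. ?fs i ys) [0..<Suc n] = arg 0 ys # drop 2 ys"
      using l by (auto simp: arg_def nth_Cons' simp del: upt_Suc intro!: nth_equalityI)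
    then show "F (arg 0 (map (\<lambda>i. ?fs i ys) [0..<Suc n])) (tl (map (\<lambda>i. ?fs i ys) [0..<Suc n]))
        = F (arg 0 ys) (drop 2 ys)"
      by (simp add: arg_def)
  qed
qed

lemma pr_sum:
  assumes "pr (Suc n) (\<lambda>ys. F (arg 0 ys) (tl ys))" "pr n b"
  shows "pr n (\<lambda>xs. \<Sum>i<b xs. F i xs)"
proof -
  have "pr n (\<lambda>xs. natrec 0 (\<lambda>m v. v + F m xs) (b xs))"
    by (rule pr_natrec) (auto intro!: pr_add pr_arg pr_const pr_skip_arg1 assms)
  moreover have "natrec 0 (\<lambda>m v. v + F m xs) b = (\<Sum>i<b. F i xs)" for b xs
    by (induction b) auto
  ultimately show ?thesis by simp
qed

lemma prp_ex:
  assumes "prp (Suc n) (\<lambda>ys. P (arg 0 ys) (tl ys))" "pr n b"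
  shows "prp n (\<lambda>xs. \<exists>i<b xs. P i xs)"
proof -
  have "pr n (\<lambda>xs. if (\<Sum>i<b xs. if P i xs then 1 else (0::nat)) = 0 then 0 else 1)"
    using assms unfolding prp_def by (intro pr_ifz pr_sum pr_const) auto
  then show ?thesis unfolding prp_def by (rule pr_cong) auto
qed

lemma prp_all:
  assumes "prp (Suc n) (\<lambda>ys. P (arg 0 ys) (tl ys))" "pr n b"
  shows "prp n (\<lambda>xs. \<forall>i<b xs. P i xs)"
proof -
  have "prp n (\<lambda>xs. \<not> (\<exists>i<b xs. \<not> P i xs))"
    using assms by (intro prp_not prp_ex) auto
  then show ?thesis by simp
qed

text \<open>Bounded search for the unique witness below b (0 if there is none or several).\<close>
definition bsearch :: "nat \<Rightarrow> (nat \<Rightarrow> bool) \<Rightarrow> nat" where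
  "bsearch b P = (\<Sum>i<b. if P i then i else 0)"

lemma bsearch_eq:
  assumes j: "j < b" "P j" and uniq: "\<And>i. P i \<Longrightarrow> i = j"
  shows "bsearch b P = j"
proof -
  have "(if P i then i else 0) = (if i = j then i else 0)" for i
    using j(2) uniq[of i] by (cases "P i") auto
  then have "bsearch b P = (\<Sum>i<b. if i = j then i else 0)"
    unfolding bsearch_def by presburger
  also have "\<dots> = j" using j by (simp add: sum.delta)
  finally show ?thesis .
qed

lemma pr_bsearch:
  assumes "prp (Suc n) (\<lambda>ys. P (arg 0 ys) (tl ys))" "pr n b"
  shows "pr n (\<lambda>xs. bsearch (b xs) (\<lambda>i. P i xs))"
  unfolding bsearch_def
proof (rule pr_sum)
  show "pr (Suc n) (\<lambda>ys. if P (arg 0 ys) (tl ys) then arg 0 ys else 0)"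
    using assms(1) by (rule pr_if) (simp_all add: pr_arg pr_const)
qed (rule assms(2))

lemma pr_div2: "pr n f \<Longrightarrow> pr n (\<lambda>xs. f xs div 2)"
proof -
  let ?P = "\<lambda>h N. N = h + h \<or> N = Suc (h + h)"
  have "pr 1 (\<lambda>ys. bsearch (Suc (arg 0 ys)) (\<lambda>h. ?P h (arg 0 ys)))"
    by (rule pr_bsearch) (rule prp_disj prp_eq pr_add pr_Suc pr_arg | simp add: arg_tl)+
  moreover have "bsearch (Suc N) (\<lambda>h. ?P h N) = N div 2" for N
    by (rule bsearch_eq) auto
  ultimately have "pr 1 (\<lambda>ys. arg 0 ys div 2)" by simp
  then show "pr n f \<Longrightarrow> pr n (\<lambda>xs. f xs div 2)" by (rule pr_lift1)
qed

lemmas pr_intros = pr_const pr_arg pr_Suc pr_add pr_diff pr_mult pr_pow2 pr_div2 pr_ifz pr_if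
  pr_sum pr_bsearch prp_eq prp_less prp_le prp_not prp_conj prp_disj prp_imp prp_ex prp_all

lemma pr_triangle: "pr n f \<Longrightarrow> pr n (\<lambda>xs. triangle (f xs))"
proof -
  have "pr 1 (\<lambda>xs. natrec 0 (\<lambda>j t. t + Suc j) (arg 0 xs))"
    by (rule pr_natrec) (rule pr_intros | simp only: arg_drop | arith)+
  moreover have "natrec 0 (\<lambda>j t. t + Suc j) b = triangle b" for b by (induction b) auto
  ultimately have "pr 1 (\<lambda>ys. triangle (arg 0 ys))" by (simp only:)
  then show "pr n f \<Longrightarrow> pr n (\<lambda>xs. triangle (f xs))" by (rule pr_lift1)
qed

lemma pr_prod_encode: "pr n f \<Longrightarrow> pr n g \<Longrightarrow> pr n (\<lambda>xs. prod_encode (f xs, g xs))"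
proof -
  have "pr 2 (\<lambda>ys. triangle (arg 0 ys + arg 1 ys) + arg 0 ys)"
    by (rule pr_intros pr_triangle | arith)+
  then have "pr 2 (\<lambda>ys. prod_encode (arg 0 ys, arg 1 ys))" by (simp add: prod_encode_def)
  then show "pr n f \<Longrightarrow> pr n g \<Longrightarrow> pr n (\<lambda>xs. prod_encode (f xs, g xs))"
    using pr_lift2[where h="\<lambda>a b. prod_encode (a, b)"] by blast
qed

text \<open>Head and tail of a list code, using list_encode (x # xs) = Suc (prod_encode (x, list_encode xs));
  both components lie below the code, so they are found by bounded search.\<close>
definition headc :: "nat \<Rightarrow> nat" where
  "headc c = bsearch c (\<lambda>x. \<exists>y<c. prod_encode (x, y) = c - 1)"

definition tailc :: "nat \<Rightarrow> nat" where
  "tailc c = bsearch c (\<lambda>y. \<exists>x<c. prod_encode (x, y) = c - 1)"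

lemma headc_tailc_code:
  "headc (Suc (prod_encode (x, y))) = x" "tailc (Suc (prod_encode (x, y))) = y"
proof -
  let ?c = "Suc (prod_encode (x, y))"
  have xy: "x < ?c" "y < ?c" using le_prod_encode_1[of x y] le_prod_encode_2[of y x] by auto
  show "headc ?c = x" unfolding headc_def by (rule bsearch_eq) (use xy in auto)
  show "tailc ?c = y" unfolding tailc_def by (rule bsearch_eq) (use xy in auto)
qed

lemma tailc_list: "tailc (list_encode xs) = list_encode (tl xs)"
proof (cases xs)
  case Nil then show ?thesis by (simp add: tailc_def bsearch_def)
qed (simp add: headc_tailc_code)

lemma pr_headc: "pr n f \<Longrightarrow> pr n (\<lambda>xs. headc (f xs))"
proof -
  have "pr 1 (\<lambda>ys. headc (arg 0 ys))" unfolding headc_def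
    by (rule pr_intros pr_prod_encode | simp only: arg_tl | arith)+
  then show "pr n f \<Longrightarrow> pr n (\<lambda>xs. headc (f xs))" by (rule pr_lift1)
qed

lemma pr_tailc: "pr n f \<Longrightarrow> pr n (\<lambda>xs. tailc (f xs))"
proof -
  have "pr 1 (\<lambda>ys. tailc (arg 0 ys))" unfolding tailc_def
    by (rule pr_intros pr_prod_encode | simp only: arg_tl | arith)+
  then show "pr n f \<Longrightarrow> pr n (\<lambda>xs. tailc (f xs))" by (rule pr_lift1)
qed

text \<open>The i-th entry of a list code, shifted by one so that 0 signals "not available".
  Applied to prefix_code p k it reads p i once the prefix is longer than i.\<close>
definition nthc :: "nat \<Rightarrow> nat \<Rightarrow> nat" where
  "nthc i c = (let d = natrec c (\<lambda>_ v. tailc v) i in if d = 0 then 0 else Suc (headc d))"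

lemma pr_nthc: "pr n f \<Longrightarrow> pr n g \<Longrightarrow> pr n (\<lambda>xs. nthc (f xs) (g xs))"
proof -
  have drop: "pr 2 (\<lambda>xs. natrec (arg 1 xs) (\<lambda>_ v. tailc v) (arg 0 xs))"
    by (rule pr_natrec) (rule pr_intros pr_tailc | simp only: arg_drop | arith)+
  have "pr 2 (\<lambda>ys. nthc (arg 0 ys) (arg 1 ys))" unfolding nthc_def Let_def
    by (intro pr_ifz pr_const pr_Suc pr_headc drop)
  then show "pr n f \<Longrightarrow> pr n g \<Longrightarrow> pr n (\<lambda>xs. nthc (f xs) (g xs))" by (rule pr_lift2)
qed

lemma nthc_list: "nthc i (list_encode xs) = (if i < length xs then Suc (xs ! i) else 0)"
proof -
  have drop: "natrec (list_encode xs) (\<lambda>_ v. tailc v) i = list_encode (drop i xs)"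
    by (induction i) (auto simp: tailc_list drop_Suc tl_drop)
  show ?thesis
  proof (cases "i < length xs")
    case True
    then have "drop i xs = xs ! i # drop (Suc i) xs" by (simp add: Cons_nth_drop_Suc)
    then show ?thesis using True by (simp add: nthc_def drop headc_tailc_code)
  qed (simp add: nthc_def drop)
qed

lemma nthc_prefix: "nthc i (prefix_code p k) = (if i < k then Suc (p i) else 0)"
  by (simp add: prefix_code_def nthc_list)

fun bw_decode :: "nat \<Rightarrow> bool list" where
  "bw_decode 0 = []"
| "bw_decode (Suc n) = odd n # bw_decode (n div 2)"

lemma bw_encode_decode [simp]: "bw_encode (bw_decode n) = n"
  by (induction n rule: bw_decode.induct) auto

lemma bw_decode_encode [simp]: "bw_decode (bw_encode w) = w"
  by (induction w) auto

lemma bw_encode_eq_iff: "bw_encode u = bw_encode w \<longleftrightarrow> u = w"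
  by (metis bw_decode_encode)

lemma bw_encode_append: "bw_encode (u @ v) = bw_encode u + 2 ^ length u * bw_encode v"
  by (induction u) auto

lemma bw_encode_bounds: "2 ^ length w \<le> Suc (bw_encode w) \<and> Suc (bw_encode w) < 2 ^ Suc (length w)"
  by (induction w) auto

definition code_length :: "nat \<Rightarrow> nat" where
  "code_length c = bsearch (Suc c) (\<lambda>l. 2 ^ l \<le> Suc c \<and> Suc c < 2 ^ Suc l)"

lemma code_length [simp]: "code_length (bw_encode w) = length w"
  unfolding code_length_def
proof (rule bsearch_eq)
  let ?N = "Suc (bw_encode w)"
  show "length w < Suc (bw_encode w)"
    using bw_encode_bounds[of w] less_exp[of "length w"] by linarith
  show "2 ^ length w \<le> ?N \<and> ?N < 2 ^ Suc (length w)" by (rule bw_encode_bounds)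
  fix l assume l: "2 ^ l \<le> ?N \<and> ?N < 2 ^ Suc l"
  have "(2::nat) ^ l < 2 ^ Suc (length w)" "(2::nat) ^ length w < 2 ^ Suc l"
    using l bw_encode_bounds[of w] by linarith+
  then have "l < Suc (length w)" "length w < Suc l"
    by (metis power_strict_increasing_iff one_less_numeral_iff semiring_norm(76))+
  then show "l = length w" by simp
qed

definition code_child :: "nat \<Rightarrow> nat \<Rightarrow> nat" where
  "code_child c b = c + 2 ^ code_length c * Suc b"

lemma code_child:
  "code_child (bw_encode w) 0 = bw_encode (w @ [False])"
  "code_child (bw_encode w) 1 = bw_encode (w @ [True])"
  by (simp_all add: code_child_def bw_encode_append)

definition code_prefix :: "nat \<Rightarrow> nat \<Rightarrow> bool" where
  "code_prefix u c \<longleftrightarrow> (\<exists>z<Suc c. c = u + 2 ^ code_length u * z)"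

lemma code_prefix: "code_prefix (bw_encode u) (bw_encode w) \<longleftrightarrow> (\<exists>v. w = u @ v)"
proof
  assume "code_prefix (bw_encode u) (bw_encode w)"
  then obtain z where "bw_encode w = bw_encode u + 2 ^ length u * z"
    by (auto simp: code_prefix_def)
  then have "bw_encode w = bw_encode (u @ bw_decode z)" by (simp add: bw_encode_append)
  then show "\<exists>v. w = u @ v" by (auto simp: bw_encode_eq_iff)
next
  assume "\<exists>v. w = u @ v"
  then obtain v where v: "w = u @ v" by blast
  have "bw_encode v \<le> 2 ^ length u * bw_encode v" by simp
  then show "code_prefix (bw_encode u) (bw_encode w)"
    unfolding code_prefix_def v bw_encode_append code_length
    by (intro exI[of _ "bw_encode v"]) linarith
qed

definition code_mem :: "nat \<Rightarrow> nat \<Rightarrow> bool" where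
  "code_mem M c \<longleftrightarrow> (\<exists>q<Suc M. \<exists>r<2 ^ c. M = (2 * q + 1) * 2 ^ c + r)"

lemma code_mem: "code_mem M c \<longleftrightarrow> c \<in> set_decode M"
proof
  assume "code_mem M c"
  then obtain q r where "r < 2 ^ c" "M = (2 * q + 1) * 2 ^ c + r" by (auto simp: code_mem_def)
  then have "M div 2 ^ c = 2 * q + 1" by (simp add: div_plus_div_distrib_dvd_left)
  then show "c \<in> set_decode M" by (simp add: set_decode_def)
next
  assume "c \<in> set_decode M"
  then have odd: "odd (M div 2 ^ c)" by (simp add: set_decode_def)
  define q where "q = M div 2 ^ c div 2"
  have "M div 2 ^ c = 2 * q + 1" using odd unfolding q_def by (metis odd_two_times_div_two_succ)
  moreover have "M = (M div 2 ^ c) * 2 ^ c + M mod 2 ^ c" by (rule div_mult_mod_eq[symmetric])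
  moreover have "q \<le> M" unfolding q_def by (meson div_le_dividend order_trans)
  ultimately show "code_mem M c" unfolding code_mem_def
    by (intro exI[of _ q] conjI exI[of _ "M mod 2 ^ c"]) auto
qed

lemma set_decode_less: "c \<in> set_decode M \<Longrightarrow> c < M"
proof -
  assume "c \<in> set_decode M"
  then have "M div 2 ^ c \<noteq> 0" by (metis set_decode_def mem_Collect_eq even_zero)
  then have "2 ^ c \<le> M" by (simp add: div_eq_0_iff)
  then show "c < M" using less_exp[of c] by linarith
qed

lemma pr_code_length: "pr n f \<Longrightarrow> pr n (\<lambda>xs. code_length (f xs))"
proof -
  have "pr 1 (\<lambda>ys. code_length (arg 0 ys))" unfolding code_length_def
    by (rule pr_intros | simp only: arg_tl | arith)+
  then show "pr n f \<Longrightarrow> pr n (\<lambda>xs. code_length (f xs))" by (rule pr_lift1)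
qed

lemma pr_code_child: "pr n f \<Longrightarrow> pr n g \<Longrightarrow> pr n (\<lambda>xs. code_child (f xs) (g xs))"
proof -
  have "pr 2 (\<lambda>ys. code_child (arg 0 ys) (arg 1 ys))" unfolding code_child_def
    by (rule pr_intros pr_code_length | arith)+
  then show "pr n f \<Longrightarrow> pr n g \<Longrightarrow> pr n (\<lambda>xs. code_child (f xs) (g xs))" by (rule pr_lift2)
qed

lemma prp_code_prefix: "pr n f \<Longrightarrow> pr n g \<Longrightarrow> prp n (\<lambda>xs. code_prefix (f xs) (g xs))"
proof -
  have "prp 2 (\<lambda>ys. code_prefix (arg 0 ys) (arg 1 ys))" unfolding code_prefix_def
    by (rule pr_intros pr_code_length | simp only: arg_tl | arith)+
  then show "pr n f \<Longrightarrow> pr n g \<Longrightarrow> prp n (\<lambda>xs. code_prefix (f xs) (g xs))"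
    unfolding prp_def by (rule pr_lift2[where h="\<lambda>a b. if code_prefix a b then 1 else 0"])
qed

lemma prp_code_mem: "pr n f \<Longrightarrow> pr n g \<Longrightarrow> prp n (\<lambda>xs. code_mem (f xs) (g xs))"
proof -
  have "prp 2 (\<lambda>ys. code_mem (arg 0 ys) (arg 1 ys))" unfolding code_mem_def
    by (rule pr_intros | simp only: arg_tl | arith)+
  then show "pr n f \<Longrightarrow> pr n g \<Longrightarrow> prp n (\<lambda>xs. code_mem (f xs) (g xs))"
    unfolding prp_def by (rule pr_lift2[where h="\<lambda>a b. if code_mem a b then 1 else 0"])
qed

section \<open>Computable maps and Weihrauch reductions\<close>

text \<open>If the n-th output entry of K p is a primitive recursive function R of n and of any
  prefix of p longer than u n, with u primitive recursive, then K is computable: the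
  machine answers nothing until the prefix is long enough and then answers R.\<close>
lemma computable_by_modulus:
  assumes u: "pr 1 (\<lambda>ys. u (arg 0 ys))"
    and R: "pr 2 (\<lambda>ys. R (arg 0 ys) (arg 1 ys))"
    and local: "\<And>p q n k. K p = Some q \<Longrightarrow> u n < k \<Longrightarrow> R n (prefix_code p k) = q n"
  shows "computable K"
proof -
  let ?A = "\<lambda>ys. if nthc (u (arg 0 ys)) (arg 1 ys) = 0 then 0 else Suc (R (arg 0 ys) (arg 1 ys))"
  have "pr 2 (\<lambda>ys. u (arg 0 ys))" using pr_lift1[OF u pr_arg[of 0 2]] by simp
  then have "pr 2 ?A" using R by (intro pr_ifz pr_nthc pr_arg pr_const pr_Suc) auto
  then obtain c where c: "\<And>xs. eval c xs = ?A (env 2 xs)" unfolding pr_def by blast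
  have answer: "eval c [n, prefix_code p k] = (if u n < k then Suc (R n (prefix_code p k)) else 0)"
    for n p k by (simp add: c env_id arg_def nthc_prefix)
  show ?thesis unfolding computable_def
  proof (intro exI[of _ c] allI impI conjI)
    fix p q n
    show "\<exists>k. eval c [n, prefix_code p k] \<noteq> 0"
      by (intro exI[of _ "Suc (u n)"]) (simp add: answer)
  next
    fix p q n k
    assume "K p = Some q" and "eval c [n, prefix_code p k] \<noteq> 0"
    then show "eval c [n, prefix_code p k] = Suc (q n)"
      using answer local by (auto split: if_splits)
  qed
qed

lemma weihrauch_leI:
  assumes "computable K" "computable H"
    and sol: "\<And>p x. \<delta>X p = Some x \<Longrightarrow> f x \<noteq> {} \<Longrightarrow> \<exists>h z. H p = Some h \<and> \<delta>Z h = Some z \<and> g z \<noteq> {} \<and>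
        (\<forall>s y. \<delta>W s = Some y \<longrightarrow> y \<in> g z \<longrightarrow> (\<exists>q y'. K (pair p s) = Some q \<and> \<delta>Y q = Some y' \<and> y' \<in> f x))"
  shows "weihrauch_le \<delta>X \<delta>Y f \<delta>Z \<delta>W g"
  unfolding weihrauch_le_def
proof (intro exI conjI allI impI)
  fix G assume G: "realizes \<delta>Z \<delta>W g G"
  show "realizes \<delta>X \<delta>Y f (\<lambda>p. Option.bind (H p) (\<lambda>h. Option.bind (G h) (\<lambda>r. K (pair p r))))"
    unfolding realizes_def
  proof (intro allI impI, elim conjE)
    fix p x assume "\<delta>X p = Some x" "f x \<noteq> {}"
    then obtain h z where hz: "H p = Some h" "\<delta>Z h = Some z" "g z \<noteq> {}"
      and K: "\<forall>s y. \<delta>W s = Some y \<longrightarrow> y \<in> g z \<longrightarrow> (\<exists>q y'. K (pair p s) = Some q \<and> \<delta>Y q = Some y' \<and> y' \<in> f x)"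
      using sol by blast
    obtain s y where "G h = Some s" "\<delta>W s = Some y" "y \<in> g z"
      using G hz(2,3) unfolding realizes_def by blast
    then show "\<exists>q y. Option.bind (H p) (\<lambda>h. Option.bind (G h) (\<lambda>r. K (pair p r))) = Some q \<and>
        \<delta>Y q = Some y \<and> y \<in> f x"
      using K hz(1) by auto
  qed
qed (fact assms)+

section \<open>Closed games: certificates for player 2\<close>

text \<open>w extends a word enumerated by the name a; then the cylinder of w is disjoint from
  the closed set named by a.\<close>
definition excluded :: "baire \<Rightarrow> bool list \<Rightarrow> bool" where
  "excluded a w \<longleftrightarrow> (\<exists>u v n. w = u @ v \<and> a n = Suc (bw_encode u))"

lemma in_cyl: "x \<in> cyl w \<longleftrightarrow> prefix x (length w) = w"
  unfolding cyl_def prefix_def list_eq_iff_nth_eq by auto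

lemma prefix_Suc: "prefix x (Suc n) = prefix x n @ [x n]"
  by (simp add: prefix_def)

lemma closed_named_iff: "x \<in> closed_named a \<longleftrightarrow> (\<forall>n. \<not> excluded a (prefix x n))"
proof
  assume x: "x \<in> closed_named a"
  show "\<forall>n. \<not> excluded a (prefix x n)"
  proof (intro allI notI)
    fix n assume "excluded a (prefix x n)"
    then obtain u v k where uv: "prefix x n = u @ v" "a k = Suc (bw_encode u)"
      by (auto simp: excluded_def)
    have "length u \<le> n" using arg_cong[OF uv(1), of length] by (simp add: prefix_def)
    then have "prefix x (length u) = u"
      using arg_cong[OF uv(1), of "take (length u)"] by (simp add: prefix_def take_map)
    then have "x \<in> cyl u" by (simp add: in_cyl)
    then show False using x uv(2) unfolding closed_named_def by blast
  qed
next
  assume none: "\<forall>n. \<not> excluded a (prefix x n)"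
  have "x \<notin> cyl w" if "a k = Suc (bw_encode w)" for w k
  proof
    assume "x \<in> cyl w"
    then have "excluded a (prefix x (length w))"
      using that unfolding excluded_def in_cyl by (metis append.right_neutral)
    with none show False by blast
  qed
  then show "x \<in> closed_named a" unfolding closed_named_def by blast
qed

definition cert_step :: "(bool list \<Rightarrow> nat) \<Rightarrow> baire \<Rightarrow> bool list set \<Rightarrow> bool list \<Rightarrow> bool" where
  "cert_step d a S w \<longleftrightarrow> excluded a w \<or> (d w = 1 \<and> w @ [False] \<in> S \<and> w @ [True] \<in> S) \<or>
      (d w \<noteq> 1 \<and> (w @ [False] \<in> S \<or> w @ [True] \<in> S))"

definition certificate :: "(bool list \<Rightarrow> nat) \<Rightarrow> baire \<Rightarrow> bool list set \<Rightarrow> bool" where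
  "certificate d a S \<longleftrightarrow> finite S \<and> (\<forall>w\<in>S. cert_step d a S w)"

text \<open>Positions from which player 2 can force leaving the closed set in finitely many moves.\<close>
definition certifiable :: "(bool list \<Rightarrow> nat) \<Rightarrow> baire \<Rightarrow> bool list \<Rightarrow> bool" where
  "certifiable d a w \<longleftrightarrow> (\<exists>S. certificate d a S \<and> w \<in> S)"

lemma cert_step_mono: "S \<subseteq> S' \<Longrightarrow> cert_step d a S w \<Longrightarrow> cert_step d a S' w"
  unfolding cert_step_def by blast

text \<open>Certificates are closed under adding a position satisfying the local condition, and
  under union; this makes certifiability a backward-inductive property.\<close>
lemma certificate_insert:
  assumes "certificate d a S" "cert_step d a (insert w S) w"
  shows "certificate d a (insert w S)"
  using assms cert_step_mono[of S "insert w S"] unfolding certificate_def by blast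

lemma certificate_Un:
  assumes "certificate d a S1" "certificate d a S2"
  shows "certificate d a (S1 \<union> S2)"
  using assms cert_step_mono[of S1 "S1 \<union> S2"] cert_step_mono[of S2 "S1 \<union> S2"]
  unfolding certificate_def by blast

lemma certifiable_excluded: "excluded a w \<Longrightarrow> certifiable d a w"
  unfolding certifiable_def certificate_def cert_step_def by (intro exI[of _ "{w}"]) auto

lemma certifiable_player1:
  assumes "d w = 1" "certifiable d a (w @ [False])" "certifiable d a (w @ [True])"
  shows "certifiable d a w"
proof -
  obtain S1 S2 where S: "certificate d a S1" "w @ [False] \<in> S1" "certificate d a S2" "w @ [True] \<in> S2"
    using assms(2,3) unfolding certifiable_def by blast
  have "certificate d a (insert w (S1 \<union> S2))"
    using S assms(1) by (intro certificate_insert certificate_Un) (auto simp: cert_step_def)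
  then show ?thesis unfolding certifiable_def by blast
qed

lemma certifiable_player2:
  assumes "d w \<noteq> 1" "certifiable d a (w @ [b])"
  shows "certifiable d a w"
proof -
  obtain S where S: "certificate d a S" "w @ [b] \<in> S"
    using assms(2) unfolding certifiable_def by blast
  have "cert_step d a (insert w S) w"
    using S(2) assms(1) by (cases b) (auto simp: cert_step_def)
  with S(1) have "certificate d a (insert w S)" by (rule certificate_insert)
  then show ?thesis unfolding certifiable_def by blast
qed

text \<open>If [] lies in a certificate S, player 2 wins by staying in S: a play that stays in the
  closed set never meets an excluded prefix, so all its prefixes stay in the finite S,
  which is impossible.\<close>
lemma certificate_player2_wins:
  assumes d: "\<forall>w. d w \<in> {1, 2}" and S: "certificate d a S" "[] \<in> S"
  shows "winning_strategy (d, closed_named a) 2 (\<lambda>w. w @ [False] \<notin> S)"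
  unfolding winning_strategy_def
proof (intro allI impI)
  fix x assume play: "consistent (fst (d, closed_named a)) 2 (\<lambda>w. w @ [False] \<notin> S) x"
  have "x \<notin> closed_named a"
  proof
    assume "x \<in> closed_named a"
    then have not_excl: "\<not> excluded a (prefix x n)" for n by (simp add: closed_named_iff)
    have in_S: "prefix x n \<in> S" for n
    proof (induction n)
      case 0 then show ?case using S(2) by (simp add: prefix_def)
    next
      case (Suc n)
      let ?w = "prefix x n"
      have step: "cert_step d a S ?w" using S(1) Suc unfolding certificate_def by blast
      show ?case
      proof (cases "d ?w = 1")
        case True
        then show ?thesis using step not_excl[of n] by (cases "x n") (auto simp: cert_step_def prefix_Suc)
      next
        case False
        then have "x n = (?w @ [False] \<notin> S)" using d play unfolding consistent_def by auto
        then show ?thesis using step not_excl[of n] False by (auto simp: cert_step_def prefix_Suc)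
      qed
    qed
    have "inj (prefix x)" by (rule injI) (metis length_map length_upt diff_zero prefix_def)
    moreover have "range (prefix x) \<subseteq> S" using in_S by blast
    ultimately have "finite (UNIV :: nat set)"
      using S(1) unfolding certificate_def by (meson finite_imageD finite_subset)
    then show False by simp
  qed
  then show "if (2::nat) = 1 then x \<in> snd (d, closed_named a) else x \<notin> snd (d, closed_named a)"
    by simp
qed

text \<open>If [] is not certifiable, player 1 wins by always moving to an uncertifiable
  position; player 2 cannot leave the uncertifiable positions either, and excluded
  positions are certifiable, so the play stays in the closed set.\<close>
lemma uncertifiable_player1_wins:
  assumes "\<not> certifiable d a []"
  shows "winning_strategy (d, closed_named a) 1 (\<lambda>w. certifiable d a (w @ [False]))"
  unfolding winning_strategy_def
proof (intro allI impI)
  fix x assume play: "consistent (fst (d, closed_named a)) 1 (\<lambda>w. certifiable d a (w @ [False])) x"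
  have "\<not> certifiable d a (prefix x n)" for n
  proof (induction n)
    case 0 then show ?case using assms by (simp add: prefix_def)
  next
    case (Suc n)
    let ?w = "prefix x n"
    show ?case
    proof (cases "d ?w = 1")
      case True
      then have "x n = certifiable d a (?w @ [False])" using play unfolding consistent_def by auto
      then show ?thesis
        using Suc certifiable_player1[of d ?w a] True by (cases "x n") (auto simp: prefix_Suc)
    next
      case False
      then show ?thesis using Suc certifiable_player2[of d ?w a "x n"] by (auto simp: prefix_Suc)
    qed
  qed
  then have "x \<in> closed_named a" using certifiable_excluded by (auto simp: closed_named_iff)
  then show "if (1::nat) = 1 then x \<in> snd (d, closed_named a) else x \<notin> snd (d, closed_named a)"
    by simp
qed

text \<open>At most one player has a winning strategy: the play of two strategies against each
  other is consistent with both.\<close>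
primrec play :: "(bool list \<Rightarrow> nat) \<Rightarrow> (bool list \<Rightarrow> bool) \<Rightarrow> (bool list \<Rightarrow> bool) \<Rightarrow> nat \<Rightarrow> bool list"
  where
  "play d \<sigma> \<tau> 0 = []"
| "play d \<sigma> \<tau> (Suc n) = play d \<sigma> \<tau> n @ [if d (play d \<sigma> \<tau> n) = 1 then \<sigma> (play d \<sigma> \<tau> n) else \<tau> (play d \<sigma> \<tau> n)]"

lemma Win_singleton:
  assumes d: "\<forall>w. d w \<in> {1, 2}" and i: "i \<in> Win (d, A)"
  shows "Win (d, A) = {i}"
proof -
  have "j = i" if j: "j \<in> Win (d, A)" for j
  proof (rule ccontr)
    assume "j \<noteq> i"
    then obtain \<sigma> \<tau> where \<sigma>: "winning_strategy (d, A) 1 \<sigma>" and \<tau>: "winning_strategy (d, A) 2 \<tau>"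
      using i j unfolding Win_def by auto
    define x where "x n = (let w = play d \<sigma> \<tau> n in if d w = 1 then \<sigma> w else \<tau> w)" for n
    have "prefix x n = play d \<sigma> \<tau> n" for n
      by (induction n) (simp_all add: prefix_Suc x_def Let_def prefix_def)
    then have "consistent d 1 \<sigma> x" "consistent d 2 \<tau> x"
      using d by (auto simp: consistent_def x_def)
    then show False using \<sigma> \<tau> unfolding winning_strategy_def by auto
  qed
  then show ?thesis using i by blast
qed

lemma Win_closed_game:
  assumes d: "\<forall>w. d w \<in> {1, 2}"
  shows "Win (d, closed_named a) = {if certifiable d a [] then 2 else 1}"
proof (rule Win_singleton[OF d])
  show "(if certifiable d a [] then 2 else 1) \<in> Win (d, closed_named a)"
  proof (cases "certifiable d a []")
    case True
    then obtain S where "certificate d a S" "[] \<in> S" unfolding certifiable_def by blast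
    from certificate_player2_wins[OF d this] show ?thesis using True by (auto simp: Win_def)
  next
    case False
    from uncertifiable_player1_wins[OF this] show ?thesis using False by (auto simp: Win_def)
  qed
qed

section \<open>Arithmetised certificates\<close>

text \<open>For a game name r (turn table at even, enumeration at odd positions): the word coded
  by c extends one of the first m enumerated words.\<close>
definition code_excluded :: "(nat \<Rightarrow> nat) \<Rightarrow> nat \<Rightarrow> nat \<Rightarrow> bool" where
  "code_excluded r m c \<longleftrightarrow> (\<exists>j<m. r (2 * j + 1) \<noteq> 0 \<and> code_prefix (r (2 * j + 1) - 1) c)"

text \<open>M codes a certificate containing [] that only uses the first m enumerated words.
  All quantifiers are bounded, so this is primitive recursive in (a long enough prefix of) r.\<close>
definition code_certificate :: "(nat \<Rightarrow> nat) \<Rightarrow> nat \<Rightarrow> nat \<Rightarrow> bool" where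
  "code_certificate r M m \<longleftrightarrow> code_mem M 0 \<and> (\<forall>c<M. code_mem M c \<longrightarrow> code_excluded r m c \<or>
      (r (2 * c) = 1 \<and> code_mem M (code_child c 0) \<and> code_mem M (code_child c 1)) \<or>
      (r (2 * c) \<noteq> 1 \<and> (code_mem M (code_child c 0) \<or> code_mem M (code_child c 1))))"

lemma code_certificate_cong:
  assumes "\<forall>i<2 * m. r i = r' i" "M \<le> m"
  shows "code_certificate r M m = code_certificate r' M m"
proof -
  have "j < m \<Longrightarrow> r (2 * j + 1) = r' (2 * j + 1)" for j using assms(1) by auto
  then have "code_excluded r m c = code_excluded r' m c" for c
    unfolding code_excluded_def by (intro ex_cong1) (metis (no_types, lifting))
  moreover have "c < M \<Longrightarrow> r (2 * c) = r' (2 * c)" for c using assms by auto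
  ultimately show ?thesis unfolding code_certificate_def by auto
qed

abbreviation turn_table :: "baire \<Rightarrow> bool list \<Rightarrow> nat" where
  "turn_table r \<equiv> \<lambda>w. fst_b r (bw_encode w)"

lemma code_certificate_sound:
  assumes cc: "code_certificate r M m"
  shows "certifiable (turn_table r) (snd_b r) []"
proof -
  let ?S = "bw_decode ` set_decode M"
  have "0 \<in> set_decode M" using cc by (simp add: code_certificate_def code_mem)
  then have "[] \<in> ?S" by (metis bw_decode.simps(1) image_eqI)
  moreover have "cert_step (turn_table r) (snd_b r) ?S w" if "w \<in> ?S" for w
  proof -
    let ?c = "bw_encode w"
    have c: "?c \<in> set_decode M" using that by auto
    have child: "code_mem M (code_child ?c 0) \<longleftrightarrow> w @ [False] \<in> ?S"
        "code_mem M (code_child ?c 1) \<longleftrightarrow> w @ [True] \<in> ?S"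
      unfolding code_child code_mem by (metis bw_decode_encode bw_encode_decode image_iff)+
    have excl: "excluded (snd_b r) w" if ce: "code_excluded r m ?c"
    proof -
      obtain j where j: "r (2 * j + 1) \<noteq> 0" "code_prefix (r (2 * j + 1) - 1) ?c"
        using ce unfolding code_excluded_def by blast
      let ?u = "bw_decode (r (2 * j + 1) - 1)"
      have "\<exists>v. w = ?u @ v" using j(2) by (simp flip: code_prefix)
      moreover have "snd_b r j = Suc (bw_encode ?u)" using j(1) by (simp add: snd_b_def)
      ultimately show ?thesis unfolding excluded_def by blast
    qed
    have "code_mem M ?c" using c by (simp add: code_mem)
    then have "code_excluded r m ?c \<or>
        (r (2 * ?c) = 1 \<and> code_mem M (code_child ?c 0) \<and> code_mem M (code_child ?c 1)) \<or>
        (r (2 * ?c) \<noteq> 1 \<and> (code_mem M (code_child ?c 0) \<or> code_mem M (code_child ?c 1)))"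
      using cc set_decode_less[OF c] unfolding code_certificate_def by blast
    then show ?thesis unfolding cert_step_def fst_b_def child using excl by blast
  qed
  moreover have "finite ?S" by simp
  ultimately show ?thesis unfolding certifiable_def certificate_def by blast
qed

lemma code_certificate_complete:
  assumes "certifiable (turn_table r) (snd_b r) []"
  shows "\<exists>m. \<exists>M<Suc m. code_certificate r M m"
proof -
  obtain S where S: "certificate (turn_table r) (snd_b r) S" "[] \<in> S"
    using assms unfolding certifiable_def by blast
  have fin: "finite S" using S(1) by (simp add: certificate_def)
  have "\<forall>w. \<exists>j. excluded (snd_b r) w \<longrightarrow> (\<exists>u v. w = u @ v \<and> snd_b r j = Suc (bw_encode u))"
    unfolding excluded_def by blast
  then obtain J where J: "\<And>w. excluded (snd_b r) w \<Longrightarrow>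
      \<exists>u v. w = u @ v \<and> snd_b r (J w) = Suc (bw_encode u)"
    by metis
  define M where "M = set_encode (bw_encode ` S)"
  define m where "m = M + Suc (Max (J ` S))"
  have dM: "set_decode M = bw_encode ` S" using fin by (simp add: M_def)
  have Jm: "J w < m" if "w \<in> S" for w
    using Max_ge[OF finite_imageI[OF fin] imageI[OF that, of J]] by (simp add: m_def)
  have mem: "code_mem M (bw_encode w) \<longleftrightarrow> w \<in> S" for w
    by (auto simp: code_mem dM bw_encode_eq_iff)
  have "code_certificate r M m" unfolding code_certificate_def
  proof (intro conjI allI impI)
    show "code_mem M 0" using mem[of "[]"] S(2) by simp
  next
    fix c assume "c < M" "code_mem M c"
    then obtain w where w: "w \<in> S" "c = bw_encode w" by (auto simp: code_mem dM)
    have "excluded (snd_b r) w \<Longrightarrow> code_excluded r m c"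
      using J[of w] Jm[OF w(1)] w(2) unfolding code_excluded_def snd_b_def
      by (auto simp: code_prefix)
    moreover have "cert_step (turn_table r) (snd_b r) S w" using S(1) w(1) by (simp add: certificate_def)
    ultimately show "code_excluded r m c \<or>
      (r (2 * c) = 1 \<and> code_mem M (code_child c 0) \<and> code_mem M (code_child c 1)) \<or>
      (r (2 * c) \<noteq> 1 \<and> (code_mem M (code_child c 0) \<or> code_mem M (code_child c 1)))"
      unfolding cert_step_def w(2) code_child mem fst_b_def by blast
  qed
  moreover have "M < Suc m" by (simp add: m_def)
  ultimately show ?thesis by blast
qed

text \<open>The common output map: it reads the oracle's answer s 0 (entry 1 of pair p s) and
  maps an LPO answer b \<in> {0,1} to the player 2 - b, and a player i \<in> {1,2} to 2 - i.\<close>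
definition flip_answer :: "baire \<Rightarrow> baire option" where
  "flip_answer r = Some (\<lambda>_. 2 - r 1)"

text \<open>LPO instance to game: player 1 makes every move, and the name p itself names the
  closed set (whole space if p = 0, empty otherwise).\<close>
definition lpo_game :: "baire \<Rightarrow> baire option" where
  "lpo_game p = Some (pair (\<lambda>_. 1) p)"

definition cert_search :: "baire \<Rightarrow> baire option" where
  "cert_search r = Some (\<lambda>m. if \<exists>M<Suc m. code_certificate r M m then 1 else 0)"

lemma computable_flip_answer: "computable flip_answer"
proof (rule computable_by_modulus[where u="\<lambda>_. 1" and R="\<lambda>n c. 2 - (nthc 1 c - 1)"])
  show "pr 1 (\<lambda>ys. 1)" by (rule pr_const)
  show "pr 2 (\<lambda>ys. 2 - (nthc 1 (arg 1 ys) - 1))" by (intro pr_intros pr_nthc) simp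
qed (auto simp: flip_answer_def nthc_prefix)

lemma computable_lpo_game: "computable lpo_game"
proof (rule computable_by_modulus[where u="\<lambda>n. n div 2"
      and R="\<lambda>n c. if 2 * (n div 2) = n then 1 else nthc (n div 2) c - 1"])
  show "pr 1 (\<lambda>ys. arg 0 ys div 2)" by (intro pr_intros) simp
  show "pr 2 (\<lambda>ys. if 2 * (arg 0 ys div 2) = arg 0 ys then 1 else nthc (arg 0 ys div 2) (arg 1 ys) - 1)"
    by (intro pr_intros pr_nthc) simp_all
next
  fix p q and n k :: nat
  assume "lpo_game p = Some q" "n div 2 < k"
  moreover have "2 * (n div 2) = n \<longleftrightarrow> even n" by presburger
  moreover have "q n = (if even n then 1 else p (n div 2))"
    using \<open>lpo_game p = Some q\<close> by (auto simp: lpo_game_def pair_def)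
  ultimately show "(if 2 * (n div 2) = n then 1 else nthc (n div 2) (prefix_code p k) - 1) = q n"
    by (simp add: nthc_prefix)
qed

lemma computable_cert_search: "computable cert_search"
proof (rule computable_by_modulus[where u="\<lambda>m. 2 * m"
      and R="\<lambda>m c. if \<exists>M<Suc m. code_certificate (\<lambda>i. nthc i c - 1) M m then 1 else 0"])
  show "pr 1 (\<lambda>ys. 2 * arg 0 ys)" by (intro pr_intros) simp_all
  show "pr 2 (\<lambda>ys. if \<exists>M<Suc (arg 0 ys). code_certificate (\<lambda>i. nthc i (arg 1 ys) - 1) M (arg 0 ys)
      then 1 else 0)"
    unfolding code_certificate_def code_excluded_def
    by (rule pr_intros pr_nthc prp_code_prefix prp_code_mem pr_code_child
        | simp only: arg_tl | arith)+
next
  fix p q and m k :: nat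
  assume "cert_search p = Some q" "2 * m < k"
  then show "(if \<exists>M<Suc m. code_certificate (\<lambda>i. nthc i (prefix_code p k) - 1) M m then 1 else 0) = q m"
    using code_certificate_cong[of m "\<lambda>i. nthc i (prefix_code p k) - 1" p]
    by (auto simp: cert_search_def nthc_prefix)
qed

lemma flip_answer_pair: "flip_answer (pair p s) = Some (\<lambda>_. 2 - s 0)"
  by (simp add: flip_answer_def pair_def)

lemma fst_b_pair [simp]: "fst_b (pair p q) = p" and snd_b_pair [simp]: "snd_b (pair p q) = q"
  by (simp_all add: fst_b_def snd_b_def pair_def)

text \<open>Win \<le> LPO: ask LPO whether the certificate search finds nothing.\<close>
lemma Win_le_LPO: "weihrauch_le closed_game_rep player_rep Win cantor_rep bit_rep LPO"
proof (rule weihrauch_leI[OF computable_flip_answer computable_cert_search])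
  fix r x assume "closed_game_rep r = Some x"
  then have d: "\<forall>w. turn_table r w \<in> {1, 2}" and x: "x = (turn_table r, closed_named (snd_b r))"
    by (auto simp: closed_game_rep_def split: if_splits)
  let ?cert = "certifiable (turn_table r) (snd_b r) []"
  define h where "h = (\<lambda>m. if \<exists>M<Suc m. code_certificate r M m then 1 else 0 :: nat)"
  have h0: "h = (\<lambda>_. 0) \<longleftrightarrow> \<not> ?cert"
  proof
    assume "h = (\<lambda>_. 0)"
    then show "\<not> ?cert" using code_certificate_complete by (metis h_def zero_neq_one)
  next
    assume "\<not> ?cert"
    then show "h = (\<lambda>_. 0)" using code_certificate_sound by (auto simp: h_def fun_eq_iff)
  qed
  show "\<exists>h' z. cert_search r = Some h' \<and> cantor_rep h' = Some z \<and> LPO z \<noteq> {} \<and>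
      (\<forall>s y. bit_rep s = Some y \<longrightarrow> y \<in> LPO z \<longrightarrow>
        (\<exists>q y'. flip_answer (pair r s) = Some q \<and> player_rep q = Some y' \<and> y' \<in> Win x))"
  proof (rule exI[of _ h], rule exI[of _ h], intro conjI allI impI)
    show "cert_search r = Some h" by (simp add: cert_search_def h_def)
    show "cantor_rep h = Some h" by (simp add: cantor_rep_def h_def)
    show "LPO h \<noteq> {}" by (simp add: LPO_def)
    fix s y assume "bit_rep s = Some y" "y \<in> LPO h"
    then have "s 0 = (if ?cert then 0 else 1)"
      using h0 by (auto simp: bit_rep_def LPO_def split: if_splits)
    then show "\<exists>q y'. flip_answer (pair r s) = Some q \<and> player_rep q = Some y' \<and> y' \<in> Win x"
      by (simp add: flip_answer_pair player_rep_def x Win_closed_game[OF d])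
  qed
qed

lemma Win_lpo_game:
  assumes p: "\<forall>n. p n \<le> 1"
  shows "Win (\<lambda>_. 1, closed_named p) = {if p = (\<lambda>_. 0) then 1 else 2}"
proof (rule Win_singleton)
  show "\<forall>w. (\<lambda>_. 1 :: nat) w \<in> {1, 2}" by simp
  show "(if p = (\<lambda>_. 0) then 1 else 2) \<in> Win (\<lambda>_. 1, closed_named p)"
  proof (cases "p = (\<lambda>_. 0)")
    case True
    then have "closed_named p = UNIV" by (simp add: closed_named_def)
    then have "winning_strategy (\<lambda>_. 1, closed_named p) 1 \<sigma>" for \<sigma>
      by (simp add: winning_strategy_def)
    then show ?thesis using True by (auto simp: Win_def)
  next
    case False
    then obtain n where "p n \<noteq> 0" by auto
    then have "p n = Suc (bw_encode [])" using p by (metis bw_encode.simps(1) le_SucE le_zero_eq One_nat_def)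
    then have "cyl [] \<subseteq> - closed_named p" unfolding closed_named_def by blast
    moreover have "cyl [] = UNIV" by (simp add: cyl_def)
    ultimately have "closed_named p = {}" by blast
    then have "winning_strategy (\<lambda>_. 1, closed_named p) 2 \<sigma>" for \<sigma>
      by (simp add: winning_strategy_def)
    then show ?thesis using False by (auto simp: Win_def)
  qed
qed

lemma LPO_le_Win: "weihrauch_le cantor_rep bit_rep LPO closed_game_rep player_rep Win"
proof (rule weihrauch_leI[OF computable_flip_answer computable_lpo_game])
  fix p x assume "cantor_rep p = Some x"
  then have x: "x = p" and p: "\<forall>n. p n \<le> 1" by (auto simp: cantor_rep_def split: if_splits)
  let ?game = "(\<lambda>_. 1, closed_named p) :: game"
  show "\<exists>h z. lpo_game p = Some h \<and> closed_game_rep h = Some z \<and> Win z \<noteq> {} \<and>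
      (\<forall>s y. player_rep s = Some y \<longrightarrow> y \<in> Win z \<longrightarrow>
        (\<exists>q y'. flip_answer (pair p s) = Some q \<and> bit_rep q = Some y' \<and> y' \<in> LPO x))"
  proof (rule exI[of _ "pair (\<lambda>_. 1) p"], rule exI[of _ ?game], intro conjI allI impI)
    show "lpo_game p = Some (pair (\<lambda>_. 1) p)" by (simp add: lpo_game_def)
    show "closed_game_rep (pair (\<lambda>_. 1) p) = Some ?game" by (simp add: closed_game_rep_def)
    show "Win ?game \<noteq> {}" unfolding Win_lpo_game[OF p] by simp
    fix s y assume "player_rep s = Some y" "y \<in> Win ?game"
    then have "s 0 = (if p = (\<lambda>_. 0) then 1 else 2)"
      unfolding Win_lpo_game[OF p] by (auto simp: player_rep_def split: if_splits)
    then show "\<exists>q y'. flip_answer (pair p s) = Some q \<and> bit_rep q = Some y' \<and> y' \<in> LPO x"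
      by (simp add: flip_answer_pair bit_rep_def LPO_def x)
  qed
qed

theorem proposition10:
  shows "weihrauch_equiv closed_game_rep player_rep Win cantor_rep bit_rep LPO"
  unfolding weihrauch_equiv_def using Win_le_LPO LPO_le_Win by blast

end
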